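(* Fix $\lambda_s>0,\lambda>0$, $\alpha\in(0,1)$ and a constant $c>0$. For each $n\ge3$ let $\tilde n(n)$ be an integer with $1\le\tilde n(n)\le n$ and $\tilde n(n)\le c\,n^\alpha$. Then there exist $C>0$ and $N$ such that for all $n\ge N$ and every choice of $\tilde n(n)$ distinct jammed links of the ring $R(n)$, the average age of the jammed ring satisfies $$\Delta^\ell\le\begin{cases}C\,n^{\alpha}, & \alpha\ge \tfrac12,\\ C\sqrt n, & \alpha<\tfrac12.\end{cases}$$
   Context: Version-age model. A gossip network on a finite node set $\mathcal N$ is specified by source rates $\lambda_{0j}>0$ ($j\in\mathcal N$) and gossip rates $\lambda_{ij}\ge 0$ for ordered pairs $i\neq j$ ($\lambda_{ij}$ is the rate at which node $i$ sends updates to node $j$); $\lambda_s>0$ is the source's update rate. For nonempty $S\subseteq\mathcal N$ let $N(S)=\{i\in\mathcal N\setminus S:\ \sum_{j\in S}\lambda_{ij}>0\}$, and define the version ages recursively by $$\Delta_S=\frac{\lambda_s+\sum_{i\in N(S)}\big(\sum_{j\in S}\lambda_{ij}\big)\Delta_{S\cup\{i\}}}{\sum_{j\in S}\lambda_{0j}+\sum_{i\in N(S)}\sum_{j\in S}\lambda_{ij}}$$ (well defined by downward induction on $|S|$); $\Delta_i=\Delta_{\{i\}}$. Ring $R(n)$: nodes $\{1,\dots,n\}$, $\lambda_{0j}=\lambda/n$, and for each of the $n$ ring links $\{i,i+1\}$ (indices mod $n$) $\lambda_{i,i+1}=\lambda_{i+1,i}=\lambda/2$; all other rates $0$. Jamming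 $\tilde n$ distinct ring links means setting both rates of each of these links to $0$. The average age of the jammed ring is $\Delta^\ell=\frac1n\sum_{i=1}^n\Delta_i$ computed in the jammed network. *)

theory Defs
  imports Complex_Main
begin

text \<open>General gossip network on node set V: source rates l0 j, gossip rates l i j
  (rate at which node i sends to node j), source update rate ls.\<close>

definition nbrs :: "nat set \<Rightarrow> (nat \<Rightarrow> nat \<Rightarrow> real) \<Rightarrow> nat set \<Rightarrow> nat set" where
  "nbrs V l S = {i \<in> V - S. (\<Sum>j\<in>S. l i j) > 0}"

text \<open>Version-age recursion with explicit fuel k = |V - S| (downward induction on |S|).
  When the fuel is 0 we have S \<supseteq> V, so the neighbour set is empty and the
  recursion reduces to ls / sum of source rates.\<close>

primrec age_fuel :: "nat set \<Rightarrow> (nat \<Rightarrow> real) \<Rightarrow> (nat \<Rightarrow> nat \<Rightarrow> real) \<Rightarrow> real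
    \<Rightarrow> nat \<Rightarrow> nat set \<Rightarrow> real" where
  "age_fuel V l0 l ls 0 S = ls / (\<Sum>j\<in>S. l0 j)"
| "age_fuel V l0 l ls (Suc k) S =
     (ls + (\<Sum>i\<in>nbrs V l S. (\<Sum>j\<in>S. l i j) * age_fuel V l0 l ls k (insert i S)))
     / ((\<Sum>j\<in>S. l0 j) + (\<Sum>i\<in>nbrs V l S. \<Sum>j\<in>S. l i j))"

definition version_age :: "nat set \<Rightarrow> (nat \<Rightarrow> real) \<Rightarrow> (nat \<Rightarrow> nat \<Rightarrow> real) \<Rightarrow> real
    \<Rightarrow> nat set \<Rightarrow> real" where
  "version_age V l0 l ls S = age_fuel V l0 l ls (card (V - S)) S"

text \<open>Ring R(n) on nodes {0..<n}; link k (k < n) joins k and (k+1) mod n.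
  J is the set of indices of jammed links.\<close>

definition ring_link :: "nat \<Rightarrow> nat set \<Rightarrow> nat \<Rightarrow> nat \<Rightarrow> bool" where
  "ring_link n J i j = (\<exists>k<n. k \<notin> J \<and>
      ((i = k \<and> j = (k + 1) mod n) \<or> (j = k \<and> i = (k + 1) mod n)))"

definition ring_rate :: "real \<Rightarrow> nat \<Rightarrow> nat set \<Rightarrow> nat \<Rightarrow> nat \<Rightarrow> real" where
  "ring_rate lam n J i j = (if i \<noteq> j \<and> ring_link n J i j then lam / 2 else 0)"

definition ring_src :: "real \<Rightarrow> nat \<Rightarrow> nat \<Rightarrow> real" where
  "ring_src lam n j = lam / real n"

definition jammed_ring_avg_age :: "real \<Rightarrow> real \<Rightarrow> nat \<Rightarrow> nat set \<Rightarrow> real" where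
  "jammed_ring_avg_age ls lam n J =
     (1 / real n) * (\<Sum>i<n. version_age {..<n} (ring_src lam n) (ring_rate lam n J) ls {i})"

end

theory Submission
  imports Defs
begin

text \<open>Grow the informed set \<open>S\<close> one node at a time. As long as \<open>S\<close> is not closed under gossip,
  the outside nodes gossip into it at total rate at least \<open>\<lambda>/2\<close>, so each growth step adds at most
  \<open>2\<lambda>\<^sub>s/\<lambda>\<close> to the age; once \<open>S\<close> has \<open>m\<close> nodes the source alone refreshes it at rate
  \<open>m\<lambda>/n\<close>. On the jammed ring every gossip-closed set containing node \<open>i\<close> contains the whole arc
  of \<open>i\<close> between consecutive jammed links, so taking \<open>m = min K |arc i|\<close> gives
  \<open>\<Delta>\<^sub>i \<le> 2K\<lambda>\<^sub>s/\<lambda> + (n\<lambda>\<^sub>s/\<lambda>)(1/K + 1/|arc i|)\<close>. Averaging over \<open>i\<close>, the arcs contribute at most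
  \<open>|J|\<lambda>\<^sub>s/\<lambda>\<close>, and \<open>K \<approx> \<surd>n\<close> balances the other two terms:
  \<open>\<Delta>\<^sup>\<ell> \<le> (\<lambda>\<^sub>s/\<lambda>)(5\<surd>n + |J|)\<close>.\<close>

lemma nbrs_subset: "nbrs V l S \<subseteq> V - S"
  unfolding nbrs_def by auto

lemma version_age_eq:
  assumes "finite V" and "S \<subseteq> V"
  shows "version_age V l0 l ls S =
    (ls + (\<Sum>i\<in>nbrs V l S. (\<Sum>j\<in>S. l i j) * version_age V l0 l ls (insert i S)))
    / ((\<Sum>j\<in>S. l0 j) + (\<Sum>i\<in>nbrs V l S. \<Sum>j\<in>S. l i j))"
proof (cases "card (V - S)")
  case 0
  then have "S = V" using assms by auto
  then show ?thesis by (simp add: version_age_def nbrs_def)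
next
  case (Suc k)
  have insert_eq: "version_age V l0 l ls (insert i S) = age_fuel V l0 l ls k (insert i S)"
    if "i \<in> nbrs V l S" for i
  proof -
    have "i \<in> V - S" using that nbrs_subset by blast
    moreover have "V - insert i S = (V - S) - {i}" by blast
    ultimately have "card (V - insert i S) = k"
      using Suc assms(1) by (simp add: card_Diff_singleton)
    then show ?thesis by (simp add: version_age_def)
  qed
  have "version_age V l0 l ls S = age_fuel V l0 l ls (Suc k) S"
    by (simp add: version_age_def Suc)
  then show ?thesis by (simp add: insert_eq cong: sum.cong)
qed

lemma version_age_le_of_insert_le:
  assumes "finite V" and "S \<subseteq> V"
    and "\<And>j. 0 \<le> l0 j" and "\<And>i j. 0 \<le> l i j"
    and "\<And>i. i \<in> nbrs V l S \<Longrightarrow> version_age V l0 l ls (insert i S) \<le> \<beta>"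
  shows "version_age V l0 l ls S \<le>
    (ls + (\<Sum>i\<in>nbrs V l S. \<Sum>j\<in>S. l i j) * \<beta>) / ((\<Sum>j\<in>S. l0 j) + (\<Sum>i\<in>nbrs V l S. \<Sum>j\<in>S. l i j))"
proof -
  have "(\<Sum>i\<in>nbrs V l S. (\<Sum>j\<in>S. l i j) * version_age V l0 l ls (insert i S))
      \<le> (\<Sum>i\<in>nbrs V l S. (\<Sum>j\<in>S. l i j) * \<beta>)"
    by (intro sum_mono mult_left_mono) (simp_all add: assms(4,5) sum_nonneg)
  then show ?thesis
    unfolding version_age_eq[OF assms(1,2)] sum_distrib_right[symmetric]
    by (intro divide_right_mono) (simp_all add: assms(3,4) sum_nonneg add_nonneg_nonneg)
qed

lemma version_age_le_source_bound:
  assumes "finite V" and "S \<subseteq> V"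
    and "\<And>j. 0 \<le> l0 j" and "\<And>i j. 0 \<le> l i j" and "0 \<le> ls"
    and "0 < (\<Sum>j\<in>S. l0 j)"
  shows "version_age V l0 l ls S \<le> ls / (\<Sum>j\<in>S. l0 j)"
  using assms(2,6)
proof (induction "card (V - S)" arbitrary: S rule: less_induct)
  case less
  define a where "a = (\<Sum>j\<in>S. l0 j)"
  define W where "W = (\<Sum>i\<in>nbrs V l S. \<Sum>j\<in>S. l i j)"
  have "0 < a" using less.prems(2) by (simp add: a_def)
  have "finite S" using less.prems(1) assms(1) finite_subset by blast
  have insert_le: "version_age V l0 l ls (insert i S) \<le> ls / a" if i: "i \<in> nbrs V l S" for i
  proof -
    have "i \<in> V" "i \<notin> S" using i nbrs_subset by blast+
    then have smaller: "card (V - insert i S) < card (V - S)"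
      using assms(1) by (intro psubset_card_mono) auto
    have sum_insert: "(\<Sum>j\<in>insert i S. l0 j) = l0 i + a"
      using \<open>finite S\<close> \<open>i \<notin> S\<close> by (simp add: a_def)
    have "0 < l0 i + a"
      using assms(3)[of i] \<open>0 < a\<close> by linarith
    then have "version_age V l0 l ls (insert i S) \<le> ls / (l0 i + a)"
      using less.hyps[OF smaller] less.prems(1) \<open>i \<in> V\<close> sum_insert by simp
    also have "\<dots> \<le> ls / a"
      using assms(3)[of i] assms(5) \<open>0 < a\<close> by (intro divide_left_mono) auto
    finally show ?thesis .
  qed
  have "version_age V l0 l ls S \<le> (ls + W * (ls / a)) / (a + W)"
    using version_age_le_of_insert_le[OF assms(1) less.prems(1) assms(3,4) insert_le]
    unfolding a_def W_def .
  also have "\<dots> = ls / a"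
  proof -
    have "0 \<le> W" unfolding W_def using assms(4) by (simp add: sum_nonneg)
    have "ls + W * (ls / a) = ls / a * (a + W)"
      using \<open>0 < a\<close> by (simp add: field_simps)
    with \<open>0 < a\<close> \<open>0 \<le> W\<close> show ?thesis by simp
  qed
  finally show ?case unfolding a_def .
qed

lemma version_age_le_step:
  assumes "finite V" and "S \<subseteq> V"
    and "\<And>j. 0 \<le> l0 j" and "\<And>i j. 0 \<le> l i j" and "0 \<le> ls" and "0 < g" and "0 \<le> \<beta>"
    and "i0 \<in> nbrs V l S"
    and "\<And>i. i \<in> nbrs V l S \<Longrightarrow> g \<le> (\<Sum>j\<in>S. l i j)"
    and "\<And>i. i \<in> nbrs V l S \<Longrightarrow> version_age V l0 l ls (insert i S) \<le> \<beta>"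
  shows "version_age V l0 l ls S \<le> ls / g + \<beta>"
proof -
  define a where "a = (\<Sum>j\<in>S. l0 j)"
  define W where "W = (\<Sum>i\<in>nbrs V l S. \<Sum>j\<in>S. l i j)"
  have "0 \<le> a" unfolding a_def using assms(3) by (simp add: sum_nonneg)
  have "finite (nbrs V l S)" using assms(1) nbrs_subset by (metis finite_Diff finite_subset)
  then have "(\<Sum>j\<in>S. l i0 j) \<le> W"
    unfolding W_def using assms(4,8) by (intro member_le_sum) (simp_all add: sum_nonneg)
  then have "g \<le> W" using assms(9)[OF assms(8)] by linarith
  have "version_age V l0 l ls S \<le> (ls + W * \<beta>) / (a + W)"
    using version_age_le_of_insert_le[OF assms(1-4) assms(10)] unfolding a_def W_def .
  also have "\<dots> \<le> (ls + W * \<beta>) / W"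
    using \<open>0 \<le> a\<close> \<open>g \<le> W\<close> assms(5-7) by (intro divide_left_mono) auto
  also have "\<dots> = ls / W + \<beta>"
    using \<open>g \<le> W\<close> assms(6) by (simp add: field_simps)
  also have "\<dots> \<le> ls / g + \<beta>"
    using \<open>g \<le> W\<close> assms(5,6) by (simp add: divide_left_mono)
  finally show ?thesis .
qed

lemma nbrs_weight_ge:
  assumes "finite S" and "0 \<le> g" and "\<And>i j. l i j = 0 \<or> g \<le> l i j"
    and "i \<in> nbrs V l S"
  shows "g \<le> (\<Sum>j\<in>S. l i j)"
proof -
  have nonneg: "0 \<le> l i j" for j using assms(2,3) by (metis order.trans order_refl)
  have "0 < (\<Sum>j\<in>S. l i j)" using assms(4) by (simp add: nbrs_def)
  then obtain j where "j \<in> S" "l i j \<noteq> 0" by (metis (mono_tags) less_irrefl sum.neutral)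
  then have "g \<le> l i j" using assms(3) by blast
  also have "l i j \<le> (\<Sum>j\<in>S. l i j)"
    using assms(1) \<open>j \<in> S\<close> nonneg by (intro member_le_sum) auto
  finally show ?thesis .
qed

lemma version_age_le_spreading_bound:
  assumes "finite V" and "0 < x" and "\<And>j. x \<le> l0 j"
    and "0 < g" and "\<And>i j. l i j = 0 \<or> g \<le> l i j" and "0 \<le> ls" and "0 < m"
    and "S \<subseteq> V" and "S \<noteq> {}"
    and "\<And>T. S \<subseteq> T \<Longrightarrow> T \<subseteq> V \<Longrightarrow> nbrs V l T = {} \<Longrightarrow> m \<le> card T"
  shows "version_age V l0 l ls S \<le> real (m - card S) * (ls / g) + ls / (x * real m)"
  using assms(8-10)
proof (induction "card (V - S)" arbitrary: S rule: less_induct)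
  case less
  have l0_nonneg: "0 \<le> l0 j" for j using assms(2,3) by (metis less_imp_le order.trans)
  have l_nonneg: "0 \<le> l i j" for i j using assms(4,5) by (metis less_imp_le order.trans order_refl)
  have "finite S" using less.prems(1) assms(1) finite_subset by blast
  show ?case
  proof (cases "m \<le> card S")
    case True
    have "real m * x \<le> real (card S) * x"
      using True assms(2) by (simp add: mult_right_mono)
    also have "\<dots> \<le> (\<Sum>j\<in>S. l0 j)"
      using sum_mono[of S "\<lambda>_. x" l0] assms(3) by simp
    finally have mx_le: "real m * x \<le> (\<Sum>j\<in>S. l0 j)" .
    have "0 < real m * x" using assms(2,7) by simp
    have "version_age V l0 l ls S \<le> ls / (\<Sum>j\<in>S. l0 j)"
      using \<open>0 < real m * x\<close> mx_le
      by (intro version_age_le_source_bound[OF assms(1) less.prems(1) l0_nonneg l_nonneg assms(6)])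
        linarith
    also have "\<dots> \<le> ls / (x * real m)"
      using mx_le \<open>0 < real m * x\<close> assms(6) by (simp add: divide_left_mono mult.commute)
    also have "\<dots> \<le> real (m - card S) * (ls / g) + ls / (x * real m)"
      using assms(4,6) by simp
    finally show ?thesis .
  next
    case False
    then obtain i0 where "i0 \<in> nbrs V l S" using less.prems(1,3) by blast
    define \<beta> where "\<beta> = real (m - card S - 1) * (ls / g) + ls / (x * real m)"
    have "version_age V l0 l ls (insert i S) \<le> \<beta>" if i: "i \<in> nbrs V l S" for i
    proof -
      have "i \<in> V" "i \<notin> S" using i nbrs_subset by blast+
      then have "card (V - insert i S) < card (V - S)"
        using assms(1) by (intro psubset_card_mono) auto
      moreover have "card (insert i S) = card S + 1"
        using \<open>finite S\<close> \<open>i \<notin> S\<close> by simp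
      ultimately show ?thesis
        using less.hyps[of "insert i S"] less.prems \<open>i \<in> V\<close> by (simp add: \<beta>_def)
    qed
    moreover have "0 \<le> \<beta>" using assms(2,4,6,7) by (simp add: \<beta>_def)
    moreover have "g \<le> (\<Sum>j\<in>S. l i j)" if "i \<in> nbrs V l S" for i
      using nbrs_weight_ge[OF \<open>finite S\<close> _ assms(5) that] assms(4) by simp
    ultimately have "version_age V l0 l ls S \<le> ls / g + \<beta>"
      using \<open>i0 \<in> nbrs V l S\<close>
      by (intro version_age_le_step[OF assms(1) less.prems(1) l0_nonneg l_nonneg assms(6,4)])
    also have "\<dots> = real (m - card S) * (ls / g) + ls / (x * real m)"
      using False by (simp add: \<beta>_def of_nat_diff algebra_simps)
    finally show ?thesis .
  qed
qed

lemma nbrs_empty_closed_under_senders: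
  assumes "finite T" and "\<And>i j. 0 \<le> l i j" and "nbrs V l T = {}"
    and "i \<in> V" and "j \<in> T" and "0 < l i j"
  shows "i \<in> T"
proof (rule ccontr)
  assume "i \<notin> T"
  have "l i j \<le> (\<Sum>j\<in>T. l i j)"
    using assms(1,2,5) by (intro member_le_sum) auto
  then have "i \<in> nbrs V l T"
    using \<open>i \<notin> T\<close> assms(4,6) by (simp add: nbrs_def)
  with assms(3) show False by simp
qed

lemma ring_rate_cases: "ring_rate lam n J i j = 0 \<or> lam / 2 \<le> ring_rate lam n J i j"
  unfolding ring_rate_def by simp

lemma ring_rate_unjammed_link:
  assumes "2 \<le> n" and "k < n" and "k \<notin> J"
  shows "ring_rate lam n J k (Suc k mod n) = lam / 2"
    and "ring_rate lam n J (Suc k mod n) k = lam / 2"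
proof -
  have "Suc k mod n \<noteq> k"
    using assms(1,2) by (cases "Suc k < n") (auto simp: mod_if)
  moreover have "ring_link n J k (Suc k mod n)" "ring_link n J (Suc k mod n) k"
    unfolding ring_link_def using assms(2,3) by auto
  ultimately show "ring_rate lam n J k (Suc k mod n) = lam / 2"
    and "ring_rate lam n J (Suc k mod n) k = lam / 2"
    unfolding ring_rate_def by auto
qed

lemma ring_closed_link_iff:
  assumes "0 < lam" and "2 \<le> n" and "T \<subseteq> {..<n}"
    and "nbrs {..<n} (ring_rate lam n J) T = {}" and "k < n" and "k \<notin> J"
  shows "k \<in> T \<longleftrightarrow> Suc k mod n \<in> T"
proof -
  have "finite T" using assms(3) finite_subset by blast
  moreover have "0 \<le> ring_rate lam n J i j" for i j
    using assms(1) by (simp add: ring_rate_def)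
  ultimately show ?thesis
    using nbrs_empty_closed_under_senders[OF _ _ assms(4)] ring_rate_unjammed_link[OF assms(2,5,6)]
      assms(1,2,5)
    by (metis half_gt_zero lessThan_iff mod_less_divisor order_less_le_trans pos2)
qed

lemma ring_closed_walk_iff:
  assumes "0 < lam" and "2 \<le> n" and "T \<subseteq> {..<n}"
    and "nbrs {..<n} (ring_rate lam n J) T = {}" and "\<forall>t<d. (p + t) mod n \<notin> J"
  shows "p mod n \<in> T \<longleftrightarrow> (p + d) mod n \<in> T"
  using assms(5)
proof (induction d)
  case 0
  then show ?case by simp
next
  case (Suc d)
  have "(p + d) mod n < n" using assms(2) by simp
  moreover have "(p + d) mod n \<notin> J" using Suc.prems by simp
  ultimately have "(p + d) mod n \<in> T \<longleftrightarrow> Suc ((p + d) mod n) mod n \<in> T"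
    by (rule ring_closed_link_iff[OF assms(1-4)])
  then show ?case using Suc by (simp add: mod_Suc_eq)
qed

text \<open>Walking forward from node \<open>p\<close> crosses the links \<open>(p + t) mod n\<close>; \<open>next_jam n J p\<close> is the
  first jammed one, and the nodes sharing it form an arc of the ring.\<close>

definition jam_dist :: "nat \<Rightarrow> nat set \<Rightarrow> nat \<Rightarrow> nat" where
  "jam_dist n J p = (LEAST d. (p + d) mod n \<in> J)"

definition next_jam :: "nat \<Rightarrow> nat set \<Rightarrow> nat \<Rightarrow> nat" where
  "next_jam n J p = (p + jam_dist n J p) mod n"

lemma next_jam_mem:
  assumes "J \<subseteq> {..<n}" and "j \<in> J" and "p < n"
  shows "next_jam n J p \<in> J"
proof -
  have "(p + (j + n - p)) mod n \<in> J" using assms by auto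
  then show ?thesis unfolding next_jam_def jam_dist_def by (rule LeastI)
qed

lemma ring_closed_mem_iff_next_jam:
  assumes "0 < lam" and "2 \<le> n" and "T \<subseteq> {..<n}"
    and "nbrs {..<n} (ring_rate lam n J) T = {}" and "i < n"
  shows "i \<in> T \<longleftrightarrow> next_jam n J i \<in> T"
proof -
  have "\<forall>t<jam_dist n J i. (i + t) mod n \<notin> J"
    unfolding jam_dist_def using not_less_Least by blast
  from ring_closed_walk_iff[OF assms(1-4) this] show ?thesis
    using assms(5) by (simp add: next_jam_def)
qed

lemma ring_closed_superset_arc:
  assumes "0 < lam" and "2 \<le> n" and "T \<subseteq> {..<n}"
    and "nbrs {..<n} (ring_rate lam n J) T = {}" and "i \<in> T"
  shows "{p\<in>{..<n}. next_jam n J p = next_jam n J i} \<subseteq> T"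
  using ring_closed_mem_iff_next_jam[OF assms(1-4)] assms(3,5) by auto

lemma sum_inverse_fibre_card:
  fixes h :: "'a \<Rightarrow> 'b"
  assumes "finite V"
  shows "(\<Sum>i\<in>V. 1 / real (card {p\<in>V. h p = h i})) = real (card (h ` V))"
proof -
  have "(\<Sum>i\<in>{x\<in>V. h x = y}. 1 / real (card {p\<in>V. h p = h i})) = 1" if "y \<in> h ` V" for y
  proof -
    define F where "F = {x\<in>V. h x = y}"
    have "F \<noteq> {}" using that by (auto simp: F_def)
    then have "card F \<noteq> 0" using assms by (simp add: F_def)
    have "(\<Sum>i\<in>F. 1 / real (card {p\<in>V. h p = h i})) = (\<Sum>i\<in>F. 1 / real (card F))"
      by (rule sum.cong) (auto simp: F_def)
    with \<open>card F \<noteq> 0\<close> show ?thesis by (simp add: F_def)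
  qed
  then show ?thesis by (simp add: sum.image_gen[OF assms, of _ h])
qed

lemma ring_version_age_le:
  assumes "0 < lam" and "0 \<le> ls" and "2 \<le> n" and "i < n" and "0 < K"
  shows "version_age {..<n} (ring_src lam n) (ring_rate lam n J) ls {i}
    \<le> real K * (2 * ls / lam)
      + ls * real n / lam * (1 / real K + 1 / real (card {p\<in>{..<n}. next_jam n J p = next_jam n J i}))"
proof -
  define M where "M = card {p\<in>{..<n}. next_jam n J p = next_jam n J i}"
  define m where "m = min K M"
  have "0 < M" unfolding M_def using assms(4) by (auto simp: card_gt_0_iff)
  then have "0 < m" using assms(5) by (simp add: m_def)
  have closed_card: "m \<le> card T"
    if "{i} \<subseteq> T" "T \<subseteq> {..<n}" "nbrs {..<n} (ring_rate lam n J) T = {}" for T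
  proof -
    have "M \<le> card T" unfolding M_def
      using ring_closed_superset_arc[OF assms(1,3) that(2,3)] that(1,2)
      by (intro card_mono) (auto intro: finite_subset)
    then show ?thesis by (simp add: m_def)
  qed
  have "0 < lam / real n" "0 < lam / 2" using assms(1,3) by simp_all
  have "lam / real n \<le> ring_src lam n j" for j by (simp add: ring_src_def)
  have "{i} \<subseteq> {..<n}" using assms(4) by simp
  have "version_age {..<n} (ring_src lam n) (ring_rate lam n J) ls {i}
      \<le> real (m - card {i}) * (ls / (lam / 2)) + ls / (lam / real n * real m)"
    by (rule version_age_le_spreading_bound[OF finite_lessThan \<open>0 < lam / real n\<close>
          \<open>lam / real n \<le> ring_src lam n _\<close> \<open>0 < lam / 2\<close> ring_rate_cases assms(2)
          \<open>0 < m\<close> \<open>{i} \<subseteq> {..<n}\<close> insert_not_empty closed_card])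
  also have "\<dots> \<le> real K * (2 * ls / lam) + ls * real n / lam * (1 / real m)"
  proof -
    have "real (m - 1) \<le> real K" by (simp add: m_def)
    then have "real (m - 1) * (2 * ls / lam) \<le> real K * (2 * ls / lam)"
      using assms(1,2) by (intro mult_right_mono) auto
    then show ?thesis using assms(1,3) by (simp add: field_simps)
  qed
  also have "\<dots> \<le> real K * (2 * ls / lam) + ls * real n / lam * (1 / real K + 1 / real M)"
  proof -
    have "1 / real m \<le> 1 / real K + 1 / real M"
      using assms(5) \<open>0 < M\<close> by (auto simp: m_def min_def)
    then show ?thesis using assms(1,2) by (intro add_left_mono mult_left_mono) auto
  qed
  finally show ?thesis unfolding M_def .
qed

lemma jammed_ring_avg_age_le:
  assumes "0 < lam" and "0 \<le> ls" and "2 \<le> n" and "J \<subseteq> {..<n}" and "J \<noteq> {}" and "0 < K"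
  shows "jammed_ring_avg_age ls lam n J
    \<le> real K * (2 * ls / lam) + ls * real n / lam / real K + ls / lam * real (card J)"
proof -
  define M where "M i = card {p\<in>{..<n}. next_jam n J p = next_jam n J i}" for i
  define B where "B = real K * (2 * ls / lam) + ls * real n / lam / real K"
  define A where "A = ls * real n / lam"
  have "0 \<le> A" using assms(1,2) by (simp add: A_def)
  have "(\<Sum>i<n. 1 / real (M i)) = real (card (next_jam n J ` {..<n}))"
    unfolding M_def by (rule sum_inverse_fibre_card) simp
  also have "\<dots> \<le> real (card J)"
    using next_jam_mem[OF assms(4)] assms(4,5) by (intro of_nat_mono card_mono) (auto intro: finite_subset)
  finally have arcs: "(\<Sum>i<n. 1 / real (M i)) \<le> real (card J)" .
  have "(\<Sum>i<n. version_age {..<n} (ring_src lam n) (ring_rate lam n J) ls {i})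
      \<le> (\<Sum>i<n. B + A * (1 / real (M i)))"
    using ring_version_age_le[OF assms(1-3) _ assms(6)]
    by (intro sum_mono) (simp add: B_def A_def M_def distrib_left add.assoc)
  also have "\<dots> = real n * B + A * (\<Sum>i<n. 1 / real (M i))"
    by (simp add: sum.distrib sum_distrib_left)
  also have "\<dots> \<le> real n * B + A * real (card J)"
    using arcs \<open>0 \<le> A\<close> by (intro add_left_mono mult_left_mono)
  finally have "jammed_ring_avg_age ls lam n J \<le> (real n * B + A * real (card J)) / real n"
    unfolding jammed_ring_avg_age_def using assms(3) by (simp add: divide_right_mono)
  also have "\<dots> = B + ls / lam * real (card J)"
    using assms(3) by (simp add: A_def field_simps)
  finally show ?thesis by (simp add: B_def)
qed

lemma jammed_ring_avg_age_le_sqrt: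
  assumes "0 < lam" and "0 \<le> ls" and "2 \<le> n" and "J \<subseteq> {..<n}" and "J \<noteq> {}"
  shows "jammed_ring_avg_age ls lam n J \<le> ls / lam * (5 * sqrt (real n) + real (card J))"
proof -
  define s where "s = sqrt (real n)"
  define K where "K = nat \<lceil>s\<rceil>"
  have "1 \<le> s" using assms(3) by (simp add: s_def)
  have "s \<le> real K" "real K \<le> s + 1" using \<open>1 \<le> s\<close> by (simp_all add: K_def of_nat_nat)
  have "0 < K" using \<open>s \<le> real K\<close> \<open>1 \<le> s\<close> by simp
  have "0 \<le> ls / lam" using assms(1,2) by simp
  have "real K * (2 * ls / lam) \<le> (2 * s) * (2 * ls / lam)"
    using \<open>real K \<le> s + 1\<close> \<open>1 \<le> s\<close> assms(1,2) by (intro mult_right_mono) auto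
  also have "\<dots> = ls / lam * (4 * s)" by simp
  finally have "real K * (2 * ls / lam) \<le> ls / lam * (4 * s)" .
  moreover have "ls * real n / lam / real K \<le> ls / lam * s"
  proof -
    have "real n = s * s" using assms(3) by (simp add: s_def)
    then have "ls * real n / lam / real K = ls / lam * s * (s / real K)" by simp
    also have "\<dots> \<le> ls / lam * s * 1"
    proof (rule mult_left_mono)
      show "s / real K \<le> 1" using \<open>s \<le> real K\<close> \<open>1 \<le> s\<close> by simp
      show "0 \<le> ls / lam * s" using \<open>0 \<le> ls / lam\<close> \<open>1 \<le> s\<close> by (simp only: zero_le_mult_iff) simp
    qed
    finally show ?thesis by simp
  qed
  moreover have "ls / lam * (5 * s + real (card J))
      = ls / lam * (4 * s) + ls / lam * s + ls / lam * real (card J)"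
    by (simp add: algebra_simps)
  ultimately show ?thesis
    using jammed_ring_avg_age_le[OF assms \<open>0 < K\<close>] unfolding s_def by linarith
qed

lemma sqrt_and_powr_le_dominant:
  fixes x \<alpha> :: real
  assumes "1 \<le> x"
  shows "sqrt x \<le> (if 1/2 \<le> \<alpha> then x powr \<alpha> else sqrt x)"
    and "x powr \<alpha> \<le> (if 1/2 \<le> \<alpha> then x powr \<alpha> else sqrt x)"
proof -
  have "sqrt x = x powr (1/2)" using assms by (simp add: powr_half_sqrt)
  then show "sqrt x \<le> (if 1/2 \<le> \<alpha> then x powr \<alpha> else sqrt x)"
    and "x powr \<alpha> \<le> (if 1/2 \<le> \<alpha> then x powr \<alpha> else sqrt x)"
    using assms by (auto intro: powr_mono)
qed

theorem theorem4:
  fixes ls lam \<alpha> c :: real and ntil :: "nat \<Rightarrow> nat"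
  assumes "ls > 0" and "lam > 0" and "0 < \<alpha>" and "\<alpha> < 1" and "c > 0"
    and "\<And>n. n \<ge> 3 \<Longrightarrow> 1 \<le> ntil n \<and> ntil n \<le> n \<and> real (ntil n) \<le> c * real n powr \<alpha>"
  shows "\<exists>C>0. \<exists>N. \<forall>n\<ge>N. \<forall>J. J \<subseteq> {..<n} \<and> card J = ntil n \<longrightarrow>
           jammed_ring_avg_age ls lam n J
             \<le> (if \<alpha> \<ge> 1/2 then C * real n powr \<alpha> else C * sqrt (real n))"
proof (intro exI[of _ "ls / lam * (5 + c)"] conjI exI[of _ 3] allI impI)
  show "0 < ls / lam * (5 + c)" using assms(1,2,5) by simp
  fix n :: nat and J assume "3 \<le> n" and J: "J \<subseteq> {..<n} \<and> card J = ntil n"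
  define B where "B = (if 1/2 \<le> \<alpha> then real n powr \<alpha> else sqrt (real n))"
  have "1 \<le> real n" using \<open>3 \<le> n\<close> by simp
  note dominant = sqrt_and_powr_le_dominant[OF this, of \<alpha>, folded B_def]
  have "J \<noteq> {}" and card_J: "real (card J) \<le> c * real n powr \<alpha>"
    using assms(6)[OF \<open>3 \<le> n\<close>] J by auto
  have "jammed_ring_avg_age ls lam n J \<le> ls / lam * (5 * sqrt (real n) + real (card J))"
    using jammed_ring_avg_age_le_sqrt[OF assms(2) _ _ _ \<open>J \<noteq> {}\<close>] assms(1) \<open>3 \<le> n\<close> J by simp
  also have "\<dots> \<le> ls / lam * (5 * B + c * B)"
  proof (rule mult_left_mono)
    have "c * real n powr \<alpha> \<le> c * B" using dominant(2) assms(5) by simp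
    then show "5 * sqrt (real n) + real (card J) \<le> 5 * B + c * B"
      using card_J dominant(1) by linarith
  qed (use assms(1,2) in simp)
  finally show "jammed_ring_avg_age ls lam n J
      \<le> (if \<alpha> \<ge> 1/2 then ls / lam * (5 + c) * real n powr \<alpha> else ls / lam * (5 + c) * sqrt (real n))"
    by (simp add: B_def algebra_simps split: if_splits)
qed

end
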